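(* Given $\alpha>0$ there exists $C>0$ such that for every $\rho>0$ and every $u\in C((-\rho,\rho))$, $$\ell^\alpha(\rho)\sup_{\varepsilon\in(0,\rho)}\ell^{-\alpha}(\varepsilon)\|\delta_\varepsilon u\|_{L^\infty(-\rho,\rho-\varepsilon)}\le C\Big(\operatorname{osc}_{(-\rho,\rho)}u+\ell^\alpha(\rho)\sup_{\varepsilon\in(0,\rho)}\ell^{-\alpha}(\varepsilon)\|\delta^2_\varepsilon u\|_{L^\infty(-\rho,\rho-2\varepsilon)}\Big),$$ where norms over empty intervals are interpreted as $0$.
   Context: $\ell(\rho):=|\ln(\min\{\rho,1/10\})|^{-1}$ for $\rho>0$. $\delta_\varepsilon u(x):=u(x+\varepsilon)-u(x)$ and $\delta^2_\varepsilon u(x):=u(x+2\varepsilon)-2u(x+\varepsilon)+u(x)$. $\operatorname{osc}_Eu:=\sup_Eu-\inf_Eu$. *)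

theory Defs
  imports "HOL-Analysis.Analysis"
begin

definition ell :: "real \<Rightarrow> real" where
  "ell \<rho> = inverse \<bar>ln (min \<rho> (1/10))\<bar>"

definition delta1 :: "real \<Rightarrow> (real \<Rightarrow> real) \<Rightarrow> real \<Rightarrow> real" where
  "delta1 \<epsilon> u x = u (x + \<epsilon>) - u x"

definition delta2 :: "real \<Rightarrow> (real \<Rightarrow> real) \<Rightarrow> real \<Rightarrow> real" where
  "delta2 \<epsilon> u x = u (x + 2 * \<epsilon>) - 2 * u (x + \<epsilon>) + u x"

text \<open>Sup-norm of f on the open interval (a,b), valued in the extended reals;
  equals 0 when the interval is empty. For continuous f this is the L-infinity norm.\<close>
definition supnorm :: "(real \<Rightarrow> real) \<Rightarrow> real \<Rightarrow> real \<Rightarrow> ereal" where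
  "supnorm f a b = Sup ({0} \<union> (\<lambda>x. ereal \<bar>f x\<bar>) ` {a<..<b})"

definition osc :: "(real \<Rightarrow> real) \<Rightarrow> real \<Rightarrow> real \<Rightarrow> ereal" where
  "osc u a b = (SUP x\<in>{a<..<b}. ereal (u x)) - (INF x\<in>{a<..<b}. ereal (u x))"

end

theory Submission imports Defs begin

text \<open>The weight \<open>\<ell>(\<epsilon>)\<^sup>\<alpha>\<close> is comparable, up to a factor depending only on \<open>\<alpha>\<close>, to
  \<open>h(\<epsilon>) = (|ln min(\<epsilon>, 1/10)| + 4\<alpha>)\<^sup>-\<^sup>\<alpha>\<close>, which grows by at most a factor \<open>3/2\<close> when the
  scale is doubled. Since \<open>\<delta>\<^sub>\<epsilon>u(x) = (\<delta>\<^sub>2\<^sub>\<epsilon>u(x) - \<delta>\<^sup>2\<^sub>\<epsilon>u(x))/2\<close> (or, near the right end,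
  the same identity at \<open>x - \<epsilon>\<close> with a plus sign), a first difference at scale \<open>\<epsilon>\<close> is bounded
  by half of one at scale \<open>2\<epsilon>\<close> plus half a second difference. As \<open>3/2 < 2\<close>, the bound
  \<open>|\<delta>\<^sub>\<epsilon>u| \<le> M h(\<epsilon>)\<close> with \<open>M = 3/2 osc u/h(\<rho>) + 2[\<delta>\<^sup>2u]\<close> propagates from scale \<open>2\<epsilon>\<close> down to
  scale \<open>\<epsilon>\<close>, and it holds for \<open>\<epsilon> \<ge> \<rho>/2\<close> because there the oscillation bounds \<open>\<delta>\<^sub>\<epsilon>u\<close>.\<close>

definition log_scale :: "real \<Rightarrow> real" where
  "log_scale \<epsilon> = \<bar>ln (min \<epsilon> (1/10))\<bar>"

lemma ell_eq_inverse_log_scale: "ell \<epsilon> = inverse (log_scale \<epsilon>)"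
  by (simp add: ell_def log_scale_def)

lemma ln_min_le_minus_ln10: "0 < \<epsilon> \<Longrightarrow> ln (min \<epsilon> (1/10)) \<le> - ln (10::real)"
  using ln_le_cancel_iff[of "min \<epsilon> (1/10)" "1/10"] by (simp add: ln_div)

lemma log_scale_eq: "0 < \<epsilon> \<Longrightarrow> log_scale \<epsilon> = - ln (min \<epsilon> (1/10))"
  using ln_min_le_minus_ln10[of \<epsilon>] by (simp add: log_scale_def)

lemma log_scale_ge_ln10: "0 < \<epsilon> \<Longrightarrow> ln 10 \<le> log_scale \<epsilon>"
  using ln_min_le_minus_ln10[of \<epsilon>] log_scale_eq[of \<epsilon>] by simp

lemma log_scale_pos: "0 < \<epsilon> \<Longrightarrow> 0 < log_scale \<epsilon>"
  using log_scale_ge_ln10[of \<epsilon>] ln_gt_zero[of "10::real"] by linarith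

lemma log_scale_antimono: "0 < \<epsilon> \<Longrightarrow> \<epsilon> \<le> \<epsilon>' \<Longrightarrow> log_scale \<epsilon>' \<le> log_scale \<epsilon>"
proof -
  assume "0 < \<epsilon>" "\<epsilon> \<le> \<epsilon>'"
  moreover have "ln (min \<epsilon> (1/10)) \<le> ln (min \<epsilon>' (1/10))"
    using calculation by (subst ln_le_cancel_iff) auto
  ultimately show ?thesis using log_scale_eq[of \<epsilon>] log_scale_eq[of \<epsilon>'] by simp
qed

lemma log_scale_le_double: "0 < \<epsilon> \<Longrightarrow> log_scale \<epsilon> \<le> log_scale (2*\<epsilon>) + ln 2"
proof -
  assume \<epsilon>: "0 < \<epsilon>"
  have "ln (min (2*\<epsilon>) (1/10)) \<le> ln (2 * min \<epsilon> (1/10))"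
    using \<epsilon> by (subst ln_le_cancel_iff) auto
  also have "\<dots> = ln 2 + ln (min \<epsilon> (1/10))"
    using \<epsilon> by (simp add: ln_mult)
  finally show ?thesis
    using \<epsilon> log_scale_eq[of \<epsilon>] log_scale_eq[of "2*\<epsilon>"] by simp
qed

lemma ell_pos: "0 < \<epsilon> \<Longrightarrow> 0 < ell \<epsilon>"
  using log_scale_pos[of \<epsilon>] by (simp add: ell_eq_inverse_log_scale)

lemma ell_powr_mult_ell_powr_neg: "0 < \<epsilon> \<Longrightarrow> ell \<epsilon> powr \<alpha> * ell \<epsilon> powr (-\<alpha>) = 1"
  using ell_pos[of \<epsilon>] by (simp add: powr_minus)

text \<open>Adding \<open>4\<alpha>\<close> to the logarithm is what makes the weight doubling with constant \<open>3/2\<close>.\<close>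
definition log_weight :: "real \<Rightarrow> real \<Rightarrow> real" where
  "log_weight \<alpha> \<epsilon> = (log_scale \<epsilon> + 4*\<alpha>) powr (-\<alpha>)"

definition log_weight_const :: "real \<Rightarrow> real" where
  "log_weight_const \<alpha> = (1 + 4*\<alpha> / ln 10) powr \<alpha>"

lemma log_weight_const_ge_1: "0 < \<alpha> \<Longrightarrow> 1 \<le> log_weight_const \<alpha>"
  unfolding log_weight_const_def by (rule ge_one_powr_ge_zero) auto

lemma log_weight_pos: "0 < \<alpha> \<Longrightarrow> 0 < \<epsilon> \<Longrightarrow> 0 < log_weight \<alpha> \<epsilon>"
  using log_scale_pos[of \<epsilon>] by (simp add: log_weight_def)

lemma log_weight_mono:
  assumes "0 < \<alpha>" "0 < \<epsilon>" "\<epsilon> \<le> \<epsilon>'"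
  shows "log_weight \<alpha> \<epsilon> \<le> log_weight \<alpha> \<epsilon>'"
proof -
  have pos: "0 < log_scale \<epsilon>' + 4*\<alpha>"
    using log_scale_pos[of \<epsilon>'] assms by simp
  have "(log_scale \<epsilon>' + 4*\<alpha>) powr \<alpha> \<le> (log_scale \<epsilon> + 4*\<alpha>) powr \<alpha>"
    using log_scale_antimono[OF assms(2,3)] pos assms by (intro powr_mono2) auto
  then show ?thesis
    using pos assms by (simp add: log_weight_def powr_minus divide_simps)
qed

lemma log_weight_double_le:
  assumes \<alpha>: "0 < \<alpha>" and \<epsilon>: "0 < \<epsilon>"
  shows "log_weight \<alpha> (2*\<epsilon>) \<le> 3/2 * log_weight \<alpha> \<epsilon>"
proof -
  define s where "s = log_scale (2*\<epsilon>) + 4*\<alpha>"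
  define t where "t = log_scale \<epsilon> + 4*\<alpha>"
  have s_ge: "4*\<alpha> \<le> s" using log_scale_pos[of "2*\<epsilon>"] \<epsilon> by (simp add: s_def)
  have s_pos: "0 < s" using s_ge \<alpha> by simp
  have t_pos: "0 < t" using log_scale_pos[of \<epsilon>] \<alpha> \<epsilon> by (simp add: t_def)
  have small: "ln 2 / s * \<alpha> \<le> 1/4"
  proof -
    have "ln 2 / s * \<alpha> \<le> 1 / s * \<alpha>"
      using s_pos \<alpha> ln_le_minus_one[of "2::real"] by (intro mult_right_mono divide_right_mono) auto
    also have "\<dots> \<le> 1/4" using s_ge s_pos by (simp add: field_simps)
    finally show ?thesis .
  qed
  have "s * (1 + ln 2 / s) = s + ln 2"
    using s_pos by (simp add: field_simps)
  then have "t \<le> s * (1 + ln 2 / s)"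
    using log_scale_le_double[OF \<epsilon>] by (simp add: s_def t_def)
  then have "t powr \<alpha> \<le> (s * (1 + ln 2 / s)) powr \<alpha>"
    using t_pos \<alpha> by (intro powr_mono2) auto
  also have "\<dots> = s powr \<alpha> * (1 + ln 2 / s) powr \<alpha>"
    by (simp add: powr_mult)
  also have "(1 + ln 2 / s) powr \<alpha> \<le> exp (ln 2 / s) powr \<alpha>"
    using s_pos \<alpha> by (intro powr_mono2) auto
  also have "\<dots> = exp (ln 2 / s * \<alpha>)"
    by (simp add: exp_powr_real)
  also have "\<dots> \<le> 1 + 2 * (ln 2 / s * \<alpha>)"
    using small s_pos \<alpha> by (intro real_exp_bound_lemma) auto
  also have "\<dots> \<le> 3/2"
    using small by linarith
  finally have "t powr \<alpha> \<le> s powr \<alpha> * (3/2)"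
    using s_pos by (simp add: mult_left_mono)
  then show ?thesis
    using s_pos t_pos
    by (simp add: log_weight_def powr_minus s_def[symmetric] t_def[symmetric] divide_simps)
qed

lemma log_weight_le_ell_powr:
  assumes "0 < \<alpha>" "0 < \<epsilon>"
  shows "log_weight \<alpha> \<epsilon> \<le> ell \<epsilon> powr \<alpha>"
proof -
  have pos: "0 < log_scale \<epsilon>" using log_scale_pos assms by simp
  have "log_scale \<epsilon> powr \<alpha> \<le> (log_scale \<epsilon> + 4*\<alpha>) powr \<alpha>"
    using pos assms by (intro powr_mono2) auto
  then show ?thesis
    using pos assms
    by (simp add: log_weight_def ell_eq_inverse_log_scale powr_minus inverse_powr le_imp_inverse_le)
qed

lemma ell_powr_le_log_weight:
  assumes "0 < \<alpha>" "0 < \<epsilon>"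
  shows "ell \<epsilon> powr \<alpha> \<le> log_weight_const \<alpha> * log_weight \<alpha> \<epsilon>"
proof -
  have pos: "0 < log_scale \<epsilon>" using log_scale_pos assms by simp
  have "log_scale \<epsilon> + 4*\<alpha> \<le> (1 + 4*\<alpha> / ln 10) * log_scale \<epsilon>"
    using log_scale_ge_ln10[OF assms(2)] assms by (simp add: field_simps)
  then have "(log_scale \<epsilon> + 4*\<alpha>) powr \<alpha> \<le> ((1 + 4*\<alpha> / ln 10) * log_scale \<epsilon>) powr \<alpha>"
    using pos assms by (intro powr_mono2) auto
  also have "\<dots> = log_weight_const \<alpha> * log_scale \<epsilon> powr \<alpha>"
    by (simp add: log_weight_const_def powr_mult)
  finally have le: "(log_scale \<epsilon> + 4*\<alpha>) powr \<alpha> \<le> log_weight_const \<alpha> * log_scale \<epsilon> powr \<alpha>" .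
  have ell_eq: "ell \<epsilon> powr \<alpha> = inverse (log_scale \<epsilon> powr \<alpha>)"
    by (simp add: ell_eq_inverse_log_scale inverse_powr)
  have "0 < log_scale \<epsilon> powr \<alpha>" "0 < (log_scale \<epsilon> + 4*\<alpha>) powr \<alpha>"
    using pos assms by auto
  then show ?thesis
    unfolding ell_eq log_weight_def powr_minus using le by (simp add: field_simps)
qed

lemma abs_delta1_le_doubled_step:
  assumes "0 < \<epsilon>" "2*\<epsilon> < \<rho>" "x \<in> {-\<rho><..<\<rho>-\<epsilon>}"
  obtains y where "y \<in> {-\<rho><..<\<rho>-2*\<epsilon>}"
    "\<bar>delta1 \<epsilon> u x\<bar> \<le> (\<bar>delta1 (2*\<epsilon>) u y\<bar> + \<bar>delta2 \<epsilon> u y\<bar>) / 2"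
proof (cases "x < \<rho> - 2*\<epsilon>")
  case True
  have "delta1 \<epsilon> u x = (delta1 (2*\<epsilon>) u x - delta2 \<epsilon> u x) / 2"
    by (simp add: delta1_def delta2_def)
  then show ?thesis using that[of x] True assms by auto
next
  case False
  have "delta1 \<epsilon> u x = (delta1 (2*\<epsilon>) u (x-\<epsilon>) + delta2 \<epsilon> u (x-\<epsilon>)) / 2"
    by (simp add: delta1_def delta2_def algebra_simps)
  then show ?thesis using that[of "x-\<epsilon>"] False assms by auto
qed

lemma abs_delta1_le_of_coarse_scales:
  fixes u w :: "real \<Rightarrow> real"
  assumes \<rho>: "0 < \<rho>" and M: "0 \<le> M" "c * M + B \<le> 2 * M"
    and w_pos: "\<And>e. 0 < e \<Longrightarrow> 0 < w e"
    and w_doubling: "\<And>e. 0 < e \<Longrightarrow> w (2*e) \<le> c * w e"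
    and second: "\<And>e y. e \<in> {0<..<\<rho>} \<Longrightarrow> y \<in> {-\<rho><..<\<rho>-2*e} \<Longrightarrow> \<bar>delta2 e u y\<bar> \<le> B * w e"
    and coarse: "\<And>e z. \<rho>/2 \<le> e \<Longrightarrow> e < \<rho> \<Longrightarrow> z \<in> {-\<rho><..<\<rho>-e} \<Longrightarrow> \<bar>delta1 e u z\<bar> \<le> M * w e"
    and \<epsilon>: "\<epsilon> \<in> {0<..<\<rho>}" and x: "x \<in> {-\<rho><..<\<rho>-\<epsilon>}"
  shows "\<bar>delta1 \<epsilon> u x\<bar> \<le> M * w \<epsilon>"
proof -
  have dyadic: "\<bar>delta1 e u z\<bar> \<le> M * w e"
    if "\<rho> / 2^(n+1) \<le> e" "e < \<rho>" "z \<in> {-\<rho><..<\<rho>-e}" for n e z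
    using that
  proof (induction n arbitrary: e z)
    case 0
    then show ?case using coarse by simp
  next
    case (Suc n)
    show ?case
    proof (cases "\<rho>/2 \<le> e")
      case True
      then show ?thesis using coarse Suc.prems by simp
    next
      case False
      have "0 < \<rho> / 2^(Suc n + 1)" using \<rho> by simp
      then have e: "0 < e" using Suc.prems(1) by linarith
      obtain y where y: "y \<in> {-\<rho><..<\<rho>-2*e}"
        and step: "\<bar>delta1 e u z\<bar> \<le> (\<bar>delta1 (2*e) u y\<bar> + \<bar>delta2 e u y\<bar>) / 2"
        using abs_delta1_le_doubled_step[OF e _ Suc.prems(3)] False by auto
      have "\<bar>delta1 (2*e) u y\<bar> \<le> M * w (2*e)"
        using Suc.IH[of "2*e" y] Suc.prems(1) False y by (simp add: field_simps)
      also have "\<dots> \<le> M * (c * w e)"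
        using w_doubling[OF e] M(1) by (rule mult_left_mono)
      finally have "\<bar>delta1 (2*e) u y\<bar> + \<bar>delta2 e u y\<bar> \<le> (c * M + B) * w e"
        using second[of e y] e False y by (simp add: algebra_simps)
      also have "\<dots> \<le> 2 * M * w e"
        using M(2) w_pos[OF e] by (intro mult_right_mono) auto
      finally show ?thesis using step by simp
    qed
  qed
  obtain n where "\<rho> / \<epsilon> < 2^n" using real_arch_pow[of 2 "\<rho>/\<epsilon>"] by auto
  then have "\<rho> / 2^(n+1) \<le> \<epsilon>" using \<epsilon> by (simp add: field_simps)
  then show ?thesis using dyadic \<epsilon> x by simp
qed

lemma abs_delta1_le_doubling_weight:
  fixes u w :: "real \<Rightarrow> real"
  assumes \<rho>: "0 < \<rho>" and A: "0 \<le> A" and B: "0 \<le> B" and c: "c < 2"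
    and w_pos: "\<And>e. 0 < e \<Longrightarrow> 0 < w e"
    and w_mono: "\<And>e e'. 0 < e \<Longrightarrow> e \<le> e' \<Longrightarrow> w e \<le> w e'"
    and w_doubling: "\<And>e. 0 < e \<Longrightarrow> w (2*e) \<le> c * w e"
    and osc: "\<And>x y. x \<in> {-\<rho><..<\<rho>} \<Longrightarrow> y \<in> {-\<rho><..<\<rho>} \<Longrightarrow> \<bar>u x - u y\<bar> \<le> A"
    and second: "\<And>e y. e \<in> {0<..<\<rho>} \<Longrightarrow> y \<in> {-\<rho><..<\<rho>-2*e} \<Longrightarrow> \<bar>delta2 e u y\<bar> \<le> B * w e"
    and \<epsilon>: "\<epsilon> \<in> {0<..<\<rho>}" and x: "x \<in> {-\<rho><..<\<rho>-\<epsilon>}"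
  shows "\<bar>delta1 \<epsilon> u x\<bar> \<le> (c * A / w \<rho> + B / (2 - c)) * w \<epsilon>"
proof -
  define a where "a = c * A / w \<rho>"
  define b where "b = B / (2 - c)"
  define M where "M = a + b"
  have "0 < c"
    using w_doubling[of 1] w_pos[of 1] w_pos[of 2] zero_less_mult_pos2[of c "w 1"] by simp
  then have a0: "0 \<le> a"
    using A w_pos[OF \<rho>] by (simp add: a_def)
  then have "c * a \<le> 2 * a"
    using c by (intro mult_right_mono) auto
  moreover have "B = (2 - c) * b" "0 \<le> b"
    using B c by (simp_all add: b_def)
  ultimately have M: "0 \<le> M" "c * M + B \<le> 2 * M"
    using a0 unfolding M_def by (simp_all add: algebra_simps)
  have "\<bar>delta1 e u z\<bar> \<le> M * w e"
    if e: "\<rho>/2 \<le> e" "e < \<rho>" and z: "z \<in> {-\<rho><..<\<rho>-e}" for e z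
  proof -
    have "w \<rho> \<le> c * w e"
      using w_doubling[of "\<rho>/2"] w_mono[of "\<rho>/2" e] \<open>0 < c\<close> \<rho> e by (simp add: order_trans)
    then have "A \<le> a * w e"
      using A w_pos[OF \<rho>] by (simp add: a_def field_simps mult_left_mono)
    also have "\<dots> \<le> M * w e"
      using \<open>0 \<le> b\<close> w_pos[of e] \<rho> e by (intro mult_right_mono) (auto simp: M_def)
    finally show ?thesis
      using osc[of "z+e" z] e z by (simp add: delta1_def)
  qed
  from abs_delta1_le_of_coarse_scales[OF \<rho> M w_pos w_doubling second this \<epsilon> x]
  show ?thesis by (simp add: M_def a_def b_def)
qed

lemma ell_weighted_abs_delta1_le:
  assumes \<alpha>: "0 < \<alpha>" and \<rho>: "0 < \<rho>" and A: "0 \<le> A" and B: "0 \<le> B"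
    and osc: "\<And>x y. x \<in> {-\<rho><..<\<rho>} \<Longrightarrow> y \<in> {-\<rho><..<\<rho>} \<Longrightarrow> \<bar>u x - u y\<bar> \<le> A"
    and second: "\<And>e y. e \<in> {0<..<\<rho>} \<Longrightarrow> y \<in> {-\<rho><..<\<rho>-2*e} \<Longrightarrow>
      ell e powr (-\<alpha>) * \<bar>delta2 e u y\<bar> \<le> B"
    and \<epsilon>: "\<epsilon> \<in> {0<..<\<rho>}" and x: "x \<in> {-\<rho><..<\<rho>-\<epsilon>}"
  shows "ell \<epsilon> powr (-\<alpha>) * \<bar>delta1 \<epsilon> u x\<bar> \<le> 2 * log_weight_const \<alpha> * (A / ell \<rho> powr \<alpha> + B)"
proof -
  let ?P = "log_weight_const \<alpha>" and ?h = "log_weight \<alpha>"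
  have P: "1 \<le> ?P" using log_weight_const_ge_1[OF \<alpha>] .
  have h\<rho>: "0 < ?h \<rho>" using log_weight_pos[OF \<alpha> \<rho>] .
  have "\<bar>delta2 e u y\<bar> \<le> (?P * B) * ?h e"
    if e: "e \<in> {0<..<\<rho>}" and y: "y \<in> {-\<rho><..<\<rho>-2*e}" for e y
  proof -
    have "\<bar>delta2 e u y\<bar> = ell e powr \<alpha> * (ell e powr (-\<alpha>) * \<bar>delta2 e u y\<bar>)"
      using ell_powr_mult_ell_powr_neg[of e] e by (simp add: mult.assoc[symmetric])
    also have "\<dots> \<le> ell e powr \<alpha> * B"
      using second[OF e y] by (intro mult_left_mono) auto
    also have "\<dots> \<le> (?P * ?h e) * B"
      using ell_powr_le_log_weight[OF \<alpha>, of e] e B by (intro mult_right_mono) auto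
    finally show ?thesis by (simp add: ac_simps)
  qed
  then have "\<bar>delta1 \<epsilon> u x\<bar> \<le> (3/2 * A / ?h \<rho> + (?P * B) / (2 - 3/2)) * ?h \<epsilon>"
    using \<rho> A B P \<epsilon> x osc log_weight_pos[OF \<alpha>] log_weight_mono[OF \<alpha>] log_weight_double_le[OF \<alpha>]
    by (intro abs_delta1_le_doubling_weight[where w = ?h]) auto
  also have "\<dots> \<le> 2 * ?P * (A / ell \<rho> powr \<alpha> + B) * ell \<epsilon> powr \<alpha>"
  proof (intro mult_mono)
    have "ell \<rho> powr \<alpha> \<le> ?P * ?h \<rho>" using ell_powr_le_log_weight[OF \<alpha> \<rho>] .
    then have "1 / ?h \<rho> \<le> ?P / ell \<rho> powr \<alpha>"
      using h\<rho> ell_pos[OF \<rho>] by (simp add: field_simps)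
    then have "A * (1 / ?h \<rho>) \<le> A * (?P / ell \<rho> powr \<alpha>)"
      using A by (rule mult_left_mono)
    moreover have "0 \<le> A * (?P / ell \<rho> powr \<alpha>)"
      using A P by simp
    ultimately have "3/2 * (A * (1 / ?h \<rho>)) + ?P * B / (2 - 3/2)
        \<le> 2 * (A * (?P / ell \<rho> powr \<alpha>)) + 2 * ?P * B"
      by simp
    then show "3/2 * A / ?h \<rho> + ?P * B / (2 - 3/2) \<le> 2 * ?P * (A / ell \<rho> powr \<alpha> + B)"
      by (simp add: algebra_simps)
    show "?h \<epsilon> \<le> ell \<epsilon> powr \<alpha>" using log_weight_le_ell_powr[OF \<alpha>] \<epsilon> by simp
    show "0 \<le> 2 * ?P * (A / ell \<rho> powr \<alpha> + B)" using A B P by simp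
    show "0 \<le> ?h \<epsilon>" using log_weight_pos[OF \<alpha>] \<epsilon> by (simp add: less_imp_le)
  qed
  finally have "ell \<epsilon> powr (-\<alpha>) * \<bar>delta1 \<epsilon> u x\<bar>
      \<le> ell \<epsilon> powr (-\<alpha>) * (2 * ?P * (A / ell \<rho> powr \<alpha> + B) * ell \<epsilon> powr \<alpha>)"
    by (intro mult_left_mono) auto
  also have "\<dots> = 2 * ?P * (A / ell \<rho> powr \<alpha> + B) * (ell \<epsilon> powr \<alpha> * ell \<epsilon> powr (-\<alpha>))"
    by (simp only: ac_simps)
  finally show ?thesis
    using ell_powr_mult_ell_powr_neg[of \<epsilon>] \<epsilon> by simp
qed

lemma supnorm_nonneg: "0 \<le> supnorm f a b"
  unfolding supnorm_def by (rule Sup_upper) simp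

lemma ereal_mult_supnorm_le_iff:
  assumes g: "0 < g" and K: "0 \<le> K"
  shows "ereal g * supnorm f a b \<le> ereal K \<longleftrightarrow> (\<forall>x\<in>{a<..<b}. g * \<bar>f x\<bar> \<le> K)"
proof
  assume le: "ereal g * supnorm f a b \<le> ereal K"
  show "\<forall>x\<in>{a<..<b}. g * \<bar>f x\<bar> \<le> K"
  proof
    fix x assume "x \<in> {a<..<b}"
    then have "ereal \<bar>f x\<bar> \<le> supnorm f a b"
      unfolding supnorm_def by (intro Sup_upper) auto
    then have "ereal g * ereal \<bar>f x\<bar> \<le> ereal K"
      using le g by (meson ereal_less_eq(5) ereal_mult_left_mono less_imp_le order_trans)
    then show "g * \<bar>f x\<bar> \<le> K" by simp
  qed
next
  assume bound: "\<forall>x\<in>{a<..<b}. g * \<bar>f x\<bar> \<le> K"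
  have "supnorm f a b \<le> ereal (K / g)"
    unfolding supnorm_def using bound g K by (intro Sup_least) (auto simp: field_simps)
  then have "ereal g * supnorm f a b \<le> ereal g * ereal (K / g)"
    using g by (intro ereal_mult_left_mono) auto
  then show "ereal g * supnorm f a b \<le> ereal K"
    using g by simp
qed

lemma diff_le_osc:
  assumes "x \<in> {a<..<b}" "y \<in> {a<..<b}"
  shows "ereal (u x - u y) \<le> osc u a b"
proof -
  have "ereal (u x) - ereal (u y) \<le> osc u a b"
    unfolding osc_def using assms by (intro ereal_minus_mono SUP_upper INF_lower) auto
  then show ?thesis by simp
qed

lemma osc_nonneg: "a < b \<Longrightarrow> 0 \<le> osc u a b"
  using diff_le_osc[of "(a+b)/2" a b "(a+b)/2" u] by (simp add: zero_ereal_def)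

lemma abs_diff_le_osc:
  assumes "osc u a b = ereal A" "x \<in> {a<..<b}" "y \<in> {a<..<b}"
  shows "\<bar>u x - u y\<bar> \<le> A"
  using diff_le_osc[of x a b y u] diff_le_osc[of y a b x u] assms by (simp add: abs_le_iff)

lemma ereal_mult_le_mult_add_of_finite:
  assumes X: "0 \<le> X" and Y: "0 \<le> Y" and a: "0 < a" and c: "0 < c"
    and finite: "\<And>A B. X = ereal A \<Longrightarrow> Y = ereal B \<Longrightarrow> S \<le> ereal (c * (A / a + B))"
  shows "ereal a * S \<le> ereal c * (X + ereal a * Y)"
proof (cases "X = \<infinity> \<or> Y = \<infinity>")
  case True
  then have "X + ereal a * Y = \<infinity>" using X Y a by auto
  then have "ereal c * (X + ereal a * Y) = \<infinity>" using c by simp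
  then show ?thesis by (simp only: top_ereal_def[symmetric] top_greatest)
next
  case False
  then obtain A B where A: "X = ereal A" and B: "Y = ereal B"
    using X Y by (cases X; cases Y) auto
  have "ereal a * S \<le> ereal a * ereal (c * (A / a + B))"
    using finite[OF A B] a by (intro ereal_mult_left_mono) auto
  also have "\<dots> = ereal c * (X + ereal a * Y)"
    using a A B by (simp add: field_simps)
  finally show ?thesis .
qed

theorem lemma4p9:
  fixes \<alpha> :: real
  assumes "\<alpha> > 0"
  shows "\<exists>C>0. \<forall>\<rho>>0. \<forall>u :: real \<Rightarrow> real. continuous_on {-\<rho><..<\<rho>} u \<longrightarrow>
    ereal (ell \<rho> powr \<alpha>) *
      (SUP \<epsilon>\<in>{0<..<\<rho>}. ereal (ell \<epsilon> powr (-\<alpha>)) * supnorm (delta1 \<epsilon> u) (-\<rho>) (\<rho> - \<epsilon>))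
    \<le> ereal C * (osc u (-\<rho>) \<rho> + ereal (ell \<rho> powr \<alpha>) *
      (SUP \<epsilon>\<in>{0<..<\<rho>}. ereal (ell \<epsilon> powr (-\<alpha>)) * supnorm (delta2 \<epsilon> u) (-\<rho>) (\<rho> - 2 * \<epsilon>)))"
proof (intro exI[of _ "2 * log_weight_const \<alpha>"] conjI allI impI)
  show C: "0 < 2 * log_weight_const \<alpha>"
    using log_weight_const_ge_1[OF assms] by simp
  fix \<rho> :: real and u :: "real \<Rightarrow> real"
  assume \<rho>: "0 < \<rho>"
  have w: "0 < ell \<epsilon> powr (-\<alpha>)" if "\<epsilon> \<in> {0<..<\<rho>}" for \<epsilon>
    using ell_pos[of \<epsilon>] that by auto
  let ?S2 = "SUP \<epsilon>\<in>{0<..<\<rho>}. ereal (ell \<epsilon> powr (-\<alpha>)) * supnorm (delta2 \<epsilon> u) (-\<rho>) (\<rho> - 2 * \<epsilon>)"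
  have S2: "0 \<le> ?S2"
    using \<rho> w[of "\<rho>/2"] supnorm_nonneg by (intro SUP_upper2[of "\<rho>/2"]) auto
  show "ereal (ell \<rho> powr \<alpha>) *
      (SUP \<epsilon>\<in>{0<..<\<rho>}. ereal (ell \<epsilon> powr (-\<alpha>)) * supnorm (delta1 \<epsilon> u) (-\<rho>) (\<rho> - \<epsilon>))
    \<le> ereal (2 * log_weight_const \<alpha>) * (osc u (-\<rho>) \<rho> + ereal (ell \<rho> powr \<alpha>) * ?S2)"
  proof (rule ereal_mult_le_mult_add_of_finite[OF osc_nonneg S2 _ C])
    fix A B assume A: "osc u (-\<rho>) \<rho> = ereal A" and B: "?S2 = ereal B"
    have nonneg: "0 \<le> A" "0 \<le> B" using osc_nonneg[of "-\<rho>" \<rho> u] S2 A B \<rho> by auto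
    have second: "ell e powr (-\<alpha>) * \<bar>delta2 e u y\<bar> \<le> B"
      if "e \<in> {0<..<\<rho>}" "y \<in> {-\<rho><..<\<rho>-2*e}" for e y
      using ereal_mult_supnorm_le_iff[OF w[OF that(1)] nonneg(2)] SUP_upper[OF that(1)] B that(2)
      by (metis (no_types, lifting))
    show "(SUP \<epsilon>\<in>{0<..<\<rho>}. ereal (ell \<epsilon> powr (-\<alpha>)) * supnorm (delta1 \<epsilon> u) (-\<rho>) (\<rho> - \<epsilon>))
      \<le> ereal (2 * log_weight_const \<alpha> * (A / ell \<rho> powr \<alpha> + B))"
      using ell_weighted_abs_delta1_le[OF assms \<rho> nonneg abs_diff_le_osc[OF A] second]
        ereal_mult_supnorm_le_iff w log_weight_const_ge_1[OF assms] nonneg ell_pos[OF \<rho>]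
      by (intro SUP_least) simp
  qed (use \<rho> ell_pos[OF \<rho>] in simp_all)
qed

end
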